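(* In the setting described in the context, let $\{x^k\}$, $\{\lambda^k\}$ be generated by the IAL framework, and for each $k\ge1$ let $x(\lambda^k)\in\arg\min_{x\in\mathbb{R}^n}\mathcal{L}_\beta(x;\lambda^k)$. Then for every $k\ge1$, $$\big\|(Ax(\lambda^k)-b)-(Ax^{k+1}-b)\big\|^2\le\frac{\eta_k}{\beta}.$$
   Context: Let $A\in\mathbb{R}^{m\times n}$ and $b\in\mathbb{R}^m$. Let $f:\mathbb{R}^n\to\mathbb{R}$ be convex and differentiable with Lipschitz continuous gradient. Let $g:\mathbb{R}^n\to\mathbb{R}\cup\{+\infty\}$ be a closed proper convex (possibly nonsmooth) function with bounded domain. Fix a penalty parameter $\beta>0$. For $\lambda\in\mathbb{R}^m$, define $$\hat f_\beta(x;\lambda):=f(x)+\langle\lambda,Ax-b\rangle+\tfrac{\beta}{2}\|Ax-b\|^2,\qquad \mathcal{L}_\beta(x;\lambda):=\hat f_\beta(x;\lambda)+g(x).$$ Here $\nabla\hat f_\beta(x;\lambda)$ denotes the gradient of $\hat f_\beta$ with respect to $x$. IAL framework: choose $x^1\in\operatorname{dom} g$, $\lambda^1\in\mathbb{R}^m$, and a nonnegative sequence $\{\eta_k\}$. For $k=1,2,\dots$: find a point $x^{k+1}$ such that $$\max_{x\in\mathbb{R}^n}\Big\{\langle\nabla\hat f_\beta(x^{k+1};\lambda^k),\,x^{k+1}-x\rangle+g(x^{k+1})-g(x)\Big\}\le\eta_k,$$ and then set $\lambda^{k+1}=\lambda^k+\beta(Ax^{k+1}-b)$. *)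

theory Defs
  imports "HOL-Analysis.Analysis"
begin

definition fhat :: "(real^'n \<Rightarrow> real) \<Rightarrow> real^'n^'m \<Rightarrow> real^'m \<Rightarrow> real \<Rightarrow> real^'m \<Rightarrow> real^'n \<Rightarrow> real"
  where "fhat f A b \<beta> lam x = f x + lam \<bullet> (A *v x - b) + \<beta> / 2 * (norm (A *v x - b))\<^sup>2"

text \<open>The extended-valued g is represented by its (real) values on its effective domain D;
  outside D, g (and hence the augmented Lagrangian) is +infinity.\<close>
definition auglag :: "(real^'n \<Rightarrow> real) \<Rightarrow> (real^'n \<Rightarrow> real) \<Rightarrow> real^'n^'m \<Rightarrow> real^'m \<Rightarrow> real \<Rightarrow> real^'m \<Rightarrow> real^'n \<Rightarrow> real"
  where "auglag f g A b \<beta> lam x = fhat f A b \<beta> lam x + g x"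

end

theory Submission
  imports Defs
begin

text \<open>Since beta/2 ||A x - b||^2 is strongly convex along A, the smooth part F of the augmented
  Lagrangian falls short of linearity on a segment [u, v] by t(1 - t) beta/2 ||A u - A v||^2.
  Differentiating at u gives <grad F u, v - u> <= F v - F u - beta/2 ||A u - A v||^2, and
  comparing the exact minimiser v with the points of [v, u] gives
  (F + g) v <= (F + g) u - beta/2 ||A u - A v||^2. Adding both to the inexactness condition for
  u tested at z = v yields beta ||A u - A v||^2 <= eta.\<close>

lemma power2_norm_convex_combination:
  fixes a c :: "'a::real_inner"
  shows "(norm ((1 - t) *\<^sub>R a + t *\<^sub>R c))\<^sup>2
    = (1 - t) * (norm a)\<^sup>2 + t * (norm c)\<^sup>2 - t * (1 - t) * (norm (a - c))\<^sup>2"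
  unfolding power2_norm_eq_inner
  by (simp add: inner_add_left inner_add_right inner_diff_left inner_diff_right
      inner_commute algebra_simps)

lemma fhat_convex_combination:
  fixes A :: "real^'n^'m"
  assumes "convex_on UNIV f" "0 \<le> t" "t \<le> 1"
  shows "fhat f A b \<beta> l ((1 - t) *\<^sub>R p + t *\<^sub>R r)
    \<le> (1 - t) * fhat f A b \<beta> l p + t * fhat f A b \<beta> l r
       - t * (1 - t) * (\<beta> / 2 * (norm (A *v p - A *v r))\<^sup>2)"
proof -
  define w where "w = (1 - t) *\<^sub>R p + t *\<^sub>R r"
  have f_le: "f w \<le> (1 - t) * f p + t * f r"
    unfolding w_def using assms by (intro convex_onD) auto
  have Aw: "A *v w - b = (1 - t) *\<^sub>R (A *v p - b) + t *\<^sub>R (A *v r - b)"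
    unfolding w_def
    by (simp add: matrix_vector_right_distrib matrix_vector_mult_diff_distrib
        matrix_vector_mult_scaleR algebra_simps)
  have linear: "l \<bullet> (A *v w - b) = (1 - t) * (l \<bullet> (A *v p - b)) + t * (l \<bullet> (A *v r - b))"
    unfolding Aw by (simp add: inner_add_right)
  have quadratic: "(norm (A *v w - b))\<^sup>2 = (1 - t) * (norm (A *v p - b))\<^sup>2
      + t * (norm (A *v r - b))\<^sup>2 - t * (1 - t) * (norm (A *v p - A *v r))\<^sup>2"
    unfolding Aw power2_norm_convex_combination by simp
  show ?thesis
    using f_le unfolding fhat_def w_def[symmetric] linear quadratic by (simp add: field_simps)
qed

lemma auglag_convex_combination:
  fixes A :: "real^'n^'m"
  assumes "convex_on UNIV f" "convex_on D g" "p \<in> D" "r \<in> D" "0 \<le> t" "t \<le> 1"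
  shows "auglag f g A b \<beta> l ((1 - t) *\<^sub>R p + t *\<^sub>R r)
    \<le> (1 - t) * auglag f g A b \<beta> l p + t * auglag f g A b \<beta> l r
       - t * (1 - t) * (\<beta> / 2 * (norm (A *v p - A *v r))\<^sup>2)"
proof -
  have "g ((1 - t) *\<^sub>R p + t *\<^sub>R r) \<le> (1 - t) * g p + t * g r"
    using assms by (intro convex_onD) auto
  then show ?thesis
    using fhat_convex_combination[OF assms(1,5,6), of A b \<beta> l p r]
    unfolding auglag_def by (simp add: algebra_simps)
qed

lemma gderiv_along_line:
  assumes "GDERIV F u :> G"
  shows "((\<lambda>t. F (u + t *\<^sub>R d)) has_real_derivative G \<bullet> d) (at 0)"
proof -
  have "((\<lambda>t. u + t *\<^sub>R d) has_derivative (\<lambda>t. t *\<^sub>R d)) (at 0)"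
    by (auto intro!: derivative_eq_intros)
  moreover have "(F has_derivative (\<lambda>h. h \<bullet> G)) (at (u + 0 *\<^sub>R d))"
    using assms by (simp add: gderiv_def)
  ultimately have "((\<lambda>t. F (u + t *\<^sub>R d)) has_derivative (\<lambda>t. (t *\<^sub>R d) \<bullet> G)) (at 0)"
    by (rule has_derivative_compose)
  then show ?thesis
    unfolding has_field_derivative_def
    by (rule has_derivative_eq_rhs) (auto simp: fun_eq_iff inner_commute)
qed

lemma tendsto_at_right_0_le_linear_bound:
  fixes q :: "real \<Rightarrow> real"
  assumes "(q \<longlongrightarrow> Q) (at_right 0)" "\<And>t. 0 < t \<Longrightarrow> t < 1 \<Longrightarrow> q t \<le> a - (1 - t) * c"
  shows "Q \<le> a - c"
proof -
  have "((\<lambda>t. a - (1 - t) * c) \<longlongrightarrow> a - (1 - 0) * c) (at_right 0)"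
    by (intro tendsto_intros)
  then show ?thesis
    using assms by (intro tendsto_le[of "at_right (0::real)" "\<lambda>t. a - (1 - t) * c" _ q Q])
      (auto intro!: eventually_at_rightI[of 0 1])
qed

lemma gderiv_inner_le_of_convex_deficit:
  fixes \<phi> :: "'a::real_inner \<Rightarrow> real"
  assumes "GDERIV \<phi> u :> G"
    and deficit: "\<And>t. 0 < t \<Longrightarrow> t < 1 \<Longrightarrow>
      \<phi> ((1 - t) *\<^sub>R u + t *\<^sub>R v) \<le> (1 - t) * \<phi> u + t * \<phi> v - t * (1 - t) * c"
  shows "G \<bullet> (v - u) \<le> \<phi> v - \<phi> u - c"
proof (rule tendsto_at_right_0_le_linear_bound)
  show "((\<lambda>t. (\<phi> (u + t *\<^sub>R (v - u)) - \<phi> u) / t) \<longlongrightarrow> G \<bullet> (v - u)) (at_right 0)"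
    using gderiv_along_line[OF assms(1), of "v - u"] unfolding DERIV_def
    by (auto intro: filterlim_mono[OF _ order_refl at_le])
next
  fix t :: real assume t: "0 < t" "t < 1"
  have "u + t *\<^sub>R (v - u) = (1 - t) *\<^sub>R u + t *\<^sub>R v"
    by (simp add: algebra_simps)
  then have "\<phi> (u + t *\<^sub>R (v - u)) - \<phi> u \<le> t * (\<phi> v - \<phi> u - (1 - t) * c)"
    using deficit[OF t] by (simp add: algebra_simps)
  then show "(\<phi> (u + t *\<^sub>R (v - u)) - \<phi> u) / t \<le> \<phi> v - \<phi> u - (1 - t) * c"
    using t by (simp add: divide_le_eq mult.commute)
qed

lemma minimizer_le_of_convex_deficit:
  fixes \<psi> :: "'a::real_vector \<Rightarrow> real"
  assumes "convex C" "u \<in> C" "v \<in> C"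
    and min: "\<And>z. z \<in> C \<Longrightarrow> \<psi> v \<le> \<psi> z"
    and deficit: "\<And>t. 0 < t \<Longrightarrow> t < 1 \<Longrightarrow>
      \<psi> ((1 - t) *\<^sub>R v + t *\<^sub>R u) \<le> (1 - t) * \<psi> v + t * \<psi> u - t * (1 - t) * c"
  shows "\<psi> v \<le> \<psi> u - c"
proof (rule tendsto_at_right_0_le_linear_bound[where q = "\<lambda>_. \<psi> v"])
  fix t :: real assume t: "0 < t" "t < 1"
  have "(1 - t) *\<^sub>R v + t *\<^sub>R u \<in> C"
    using assms(1-3) t by (simp add: convex_def)
  then have "t * \<psi> v \<le> t * (\<psi> u - (1 - t) * c)"
    using min deficit[OF t] by (fastforce simp: algebra_simps)
  then show "\<psi> v \<le> \<psi> u - (1 - t) * c"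
    using t by simp
qed simp

lemma inexact_minimizer_residual_distance:
  fixes A :: "real^'n^'m"
  assumes f: "convex_on UNIV f" and g: "convex_on D g" and D: "convex D"
    and \<beta>: "\<beta> > 0"
    and grad: "GDERIV (fhat f A b \<beta> l) u :> G"
    and u: "u \<in> D" and inexact: "G \<bullet> (u - v) + g u - g v \<le> \<eta>"
    and v: "v \<in> D" and min: "\<And>z. z \<in> D \<Longrightarrow> auglag f g A b \<beta> l v \<le> auglag f g A b \<beta> l z"
  shows "(norm (A *v v - A *v u))\<^sup>2 \<le> \<eta> / \<beta>"
proof -
  define F where "F = fhat f A b \<beta> l"
  define s where "s = \<beta> / 2 * (norm (A *v v - A *v u))\<^sup>2"
  have "G \<bullet> (v - u) \<le> F v - F u - s"
  proof (rule gderiv_inner_le_of_convex_deficit[OF grad[folded F_def]])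
    fix t :: real assume "0 < t" "t < 1"
    then show "F ((1 - t) *\<^sub>R u + t *\<^sub>R v) \<le> (1 - t) * F u + t * F v - t * (1 - t) * s"
      using fhat_convex_combination[OF f, of t A b \<beta> l u v]
      by (simp add: F_def s_def norm_minus_commute)
  qed
  moreover have "auglag f g A b \<beta> l v \<le> auglag f g A b \<beta> l u - s"
  proof (rule minimizer_le_of_convex_deficit[where \<psi> = "auglag f g A b \<beta> l", OF D u v min])
    fix t :: real assume "0 < t" "t < 1"
    then show "auglag f g A b \<beta> l ((1 - t) *\<^sub>R v + t *\<^sub>R u)
      \<le> (1 - t) * auglag f g A b \<beta> l v + t * auglag f g A b \<beta> l u - t * (1 - t) * s"
      using auglag_convex_combination[OF f g v u, of t A b \<beta> l] by (simp add: s_def)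
  qed
  ultimately have "\<beta> * (norm (A *v v - A *v u))\<^sup>2 \<le> \<eta>"
    using inexact unfolding auglag_def F_def s_def by (simp add: inner_diff_right algebra_simps)
  then show ?thesis
    using \<beta> by (simp add: le_divide_eq mult.commute)
qed

theorem lemma2:
  fixes A :: "real^'n^'m" and b :: "real^'m"
    and f :: "real^'n \<Rightarrow> real" and gradf :: "real^'n \<Rightarrow> real^'n" and Lf :: real
    and g :: "real^'n \<Rightarrow> real" and D :: "(real^'n) set"
    and \<beta> :: real
    and Gfhat :: "real^'m \<Rightarrow> real^'n \<Rightarrow> real^'n"
    and x :: "nat \<Rightarrow> real^'n" and lam :: "nat \<Rightarrow> real^'m" and \<eta> :: "nat \<Rightarrow> real"
    and xlam :: "nat \<Rightarrow> real^'n"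
  assumes f_convex: "convex_on UNIV f"
    and f_grad: "\<And>y. GDERIV f y :> gradf y"
    and f_lip: "Lf-lipschitz_on UNIV gradf"
    and D_nonempty: "D \<noteq> {}"
    and D_convex: "convex D"
    and D_bounded: "bounded D"
    and g_convex: "convex_on D g"
    and g_closed: "closed {(y, t). y \<in> D \<and> g y \<le> t}"
    and \<beta>_pos: "\<beta> > 0"
    and Gfhat_grad: "\<And>l y. GDERIV (fhat f A b \<beta> l) y :> Gfhat l y"
    and x1: "x 1 \<in> D"
    and \<eta>_nonneg: "\<And>k. \<eta> k \<ge> 0"
    and x_dom: "\<And>k. k \<ge> 1 \<Longrightarrow> x (k + 1) \<in> D"
    and x_inexact: "\<And>k z. k \<ge> 1 \<Longrightarrow> z \<in> D \<Longrightarrow>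
        Gfhat (lam k) (x (k + 1)) \<bullet> (x (k + 1) - z) + g (x (k + 1)) - g z \<le> \<eta> k"
    and lam_update: "\<And>k. k \<ge> 1 \<Longrightarrow> lam (k + 1) = lam k + \<beta> *\<^sub>R (A *v x (k + 1) - b)"
    and xlam_dom: "\<And>k. k \<ge> 1 \<Longrightarrow> xlam k \<in> D"
    and xlam_min: "\<And>k z. k \<ge> 1 \<Longrightarrow> z \<in> D \<Longrightarrow>
        auglag f g A b \<beta> (lam k) (xlam k) \<le> auglag f g A b \<beta> (lam k) z"
  shows "\<forall>k\<ge>1. (norm ((A *v xlam k - b) - (A *v x (k + 1) - b)))\<^sup>2 \<le> \<eta> k / \<beta>"
proof (intro allI impI)
  fix k :: nat assume k: "k \<ge> 1"
  have "(norm (A *v xlam k - A *v x (k + 1)))\<^sup>2 \<le> \<eta> k / \<beta>"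
    using f_convex g_convex D_convex \<beta>_pos Gfhat_grad x_dom[OF k] x_inexact[OF k xlam_dom[OF k]]
      xlam_dom[OF k] xlam_min[OF k]
    by (rule inexact_minimizer_residual_distance)
  then show "(norm ((A *v xlam k - b) - (A *v x (k + 1) - b)))\<^sup>2 \<le> \<eta> k / \<beta>"
    by simp
qed

end
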